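(* Let $m,p\in\mathbb N$ and $\omega>0$. Let $A,B\in\mathbb R^{m\times m}$ be constant matrices, let $f:\mathbb R\times\mathbb R^m\to\mathbb R^m$ and $h:\mathbb R^m\to\mathbb R^m$ be continuous, with $f(t+\omega,x)=f(t,x)$ for all $t\in\mathbb R$, $x\in\mathbb R^m$. Let $\{\theta_k\}_{k\in\mathbb Z}$ be a strictly increasing sequence of reals with $\theta_{k+p}=\theta_k+\omega$ for all $k\in\mathbb Z$. Let $\{\sigma_k\}_{k\in\mathbb Z}$ be a sequence in $\mathbb R^m$ with $\sup_k\|\sigma_k\|\le M_\sigma$ for some $M_\sigma>0$, and define $g:\mathbb R\to\mathbb R^m$ by $g(t)=\sigma_k$ for $t\in(\theta_{kp},\theta_{(k+1)p}]$, $k\in\mathbb Z$. Consider the impulsive system $$\frac{dx}{dt}=Ax+f(t,x)+g(t),\ t\neq\theta_k,\qquad \Delta x|_{t=\theta_k}=Bx(\theta_k)+h(x(\theta_k)),$$ where $\Delta x|_{t=\theta_k}=x(\theta_k+)-x(\theta_k)$. Assume: (A1) $AB=BA$ and $\det(I+B)\neq0$; (A2) all eigenvalues of $A+\frac{p}{\omega}\log(I+B)$ have negative real parts; (A3) there are $M_f,M_h>0$ with $\sup_{t,x}\|f(t,x)\|\le M_f$ and $\sup_x\|h(x)\|\le M_h$; (A4) there are $L_f,L_h>0$ with $\|f(t,x_1)-f(t,x_2)\|\le L_f\|x_1-x_2\|$ for all $t,x_1,x_2$ and $\|h(x_1)-h(x_2)\|\le L_h\|x_1-x_2\|$ for all $x_1,x_2$;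 and let $N,\lambda>0$ be constants such that the matriciant $U(t,s)=e^{A(t-s)}(I+B)^{i([s,t))}$ ($t>s$), $U(s,s)=I$, of the linear system $x'=Ax$, $\Delta x|_{t=\theta_k}=Bx(\theta_k)$ satisfies $\|U(t,s)\|\le Ne^{-\lambda(t-s)}$ for all $t\ge s$, and assume moreover (A5) $N\left(\frac{L_f}{\lambda}+\frac{pL_h}{1-e^{-\lambda\omega}}\right)<1$; (A6) $NL_f+\frac{p}{\omega}\ln(1+NL_h)<\lambda$. Suppose there is a sequence $\{\zeta_n\}_{n\in\mathbb N}$ of positive integers diverging to infinity such that $\|\sigma_{k+\zeta_n}-\sigma_k\|\to0$ as $n\to\infty$ for each $k$ in bounded intervals of integers. Then the unique solution $\phi(t)$ of the system that is bounded on $\mathbb R$ satisfies $\|\phi(t+\omega\zeta_n)-\phi(t)\|\to0$ as $n\to\infty$ uniformly on compact subsets of $\mathbb R$.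
   Context: Norms are the Euclidean norm on vectors and the spectral norm on matrices. $i(J)$ denotes the number of terms of $\{\theta_k\}$ lying in the interval $J$. Solutions of the impulsive system are piecewise continuous functions, continuous except possibly at the $\theta_k$, left continuous at each $\theta_k$ with right limits $x(\theta_k+)$, satisfying the differential equation between impulse moments and the jump condition at each $\theta_k$. Under (A1)–(A5) the system has a unique solution $\phi$ bounded on the whole real line; it satisfies $\phi(t)=\int_{-\infty}^tU(t,s)[f(s,\phi(s))+g(s)]ds+\sum_{\theta_k<t}U(t,\theta_k+)h(\phi(\theta_k))$. *)

theory Defs
  imports "HOL-Analysis.Analysis"
begin

definition matpow :: "'a::semiring_1 ^'n^'n \<Rightarrow> nat \<Rightarrow> 'a^'n^'n" where
  "matpow M k = (((**) M) ^^ k) (mat 1)"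

definition mexp :: "'a::{real_normed_field,banach} ^'n^'n \<Rightarrow> 'a^'n^'n" where
  "mexp M = (\<Sum>k. (1 / fact k) *\<^sub>R matpow M k)"

definition cmat :: "real^'n^'n \<Rightarrow> complex^'n^'n" where
  "cmat M = (\<chi> i j. complex_of_real (M $ i $ j))"

definition is_eigenvalue :: "complex^'n^'n \<Rightarrow> complex \<Rightarrow> bool" where
  "is_eigenvalue M \<mu> \<longleftrightarrow> (\<exists>v. v \<noteq> 0 \<and> M *v v = \<mu> *s v)"

definition mnorm :: "real^'n^'n \<Rightarrow> real" where
  "mnorm M = onorm (\<lambda>x. M *v x)"

definition num_in :: "(int \<Rightarrow> real) \<Rightarrow> real set \<Rightarrow> nat" where
  "num_in \<theta> J = card {k. \<theta> k \<in> J}"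

definition matriciant :: "real^'n^'n \<Rightarrow> real^'n^'n \<Rightarrow> (int \<Rightarrow> real) \<Rightarrow> real \<Rightarrow> real \<Rightarrow> real^'n^'n" where
  "matriciant A B \<theta> t s =
     (if t = s then mat 1 else mexp ((t - s) *\<^sub>R A) ** matpow (mat 1 + B) (num_in \<theta> {s..<t}))"

definition impulsive_solution ::
  "real^'n^'n \<Rightarrow> real^'n^'n \<Rightarrow> (real \<Rightarrow> real^'n \<Rightarrow> real^'n) \<Rightarrow> (real \<Rightarrow> real^'n)
   \<Rightarrow> (real^'n \<Rightarrow> real^'n) \<Rightarrow> (int \<Rightarrow> real) \<Rightarrow> (real \<Rightarrow> real^'n) \<Rightarrow> bool" where
  "impulsive_solution A B f g h \<theta> x \<longleftrightarrow>
     (\<forall>t. t \<notin> range \<theta> \<longrightarrow> (x has_vector_derivative (A *v x t + f t (x t) + g t)) (at t)) \<and>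
     (\<forall>k. continuous (at_left (\<theta> k)) x \<and>
          (x \<longlongrightarrow> x (\<theta> k) + B *v x (\<theta> k) + h (x (\<theta> k))) (at_right (\<theta> k)))"

end

theory Submission
  imports Defs
begin

text \<open>
  For \<open>T = \<omega> \<zeta> n\<close> the difference \<open>w = \<phi> (\<cdot> + T) - \<phi>\<close> solves the linear impulsive
  system perturbed by the Lipschitz differences of \<open>f\<close> and \<open>h\<close> and by the forcing difference
  \<open>e = g (\<cdot> + T) - g\<close>: \<open>f\<close> is \<open>\<omega>\<close>-periodic and a shift by \<open>T\<close> maps impulse moments to
  impulse moments. Transporting \<open>w\<close> to a fixed time \<open>t\<close> by the matriciant and comparing it with
  an exponential majorant bounds \<open>w t - U t t0 w t0\<close> without integrating anything. Letting
  \<open>t0 \<rightarrow> -\<infinity>\<close> and measuring functions in the norm \<open>\<parallel>u\<parallel> = sup\<^sub>s \<bar>u s\<bar> exp (- \<gamma> \<bar>s\<bar>)\<close>, \<open>\<gamma> = \<lambda> - \<mu>\<close>,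
  gives \<open>\<parallel>w\<parallel> \<le> q \<parallel>w\<parallel> + N \<parallel>e\<parallel> / \<mu>\<close>, and (A5) makes \<open>q < 1\<close> for \<open>\<mu>\<close> slightly below \<open>\<lambda>\<close>.
  The forcing difference is bounded and, by the recurrence of \<open>\<sigma>\<close>, uniformly small on bounded
  intervals, so \<open>\<parallel>e\<parallel> \<rightarrow> 0\<close>; hence \<open>\<parallel>w\<parallel> \<rightarrow> 0\<close>, which is uniform convergence on compact sets.
  Only the commutativity in (A1), (A4), (A5) and the matriciant estimate are used; the other
  hypotheses serve the existence theory of the paper.
\<close>

section \<open>Matrices\<close>

lemma matrix_add_rdistrib: "(A + B) ** C = A ** C + B ** (C :: 'a::semiring_1^'n^'m)"
  by (simp add: matrix_matrix_mult_def vec_eq_iff sum.distrib distrib_right)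

lemma matrix_vector_mult_uminus_left: "(- M) *v x = - (M *v x)" for M :: "'a::ring_1^'n^'m"
  by (simp add: vec_eq_iff matrix_vector_mult_def sum_negf)

lemma bounded_bilinear_matrix_vector_mult:
  "bounded_bilinear ((*v) :: real^'n^'m \<Rightarrow> real^'n \<Rightarrow> real^'m)"
  unfolding bilinear_conv_bounded_bilinear[symmetric] bilinear_def
  by (simp add: linear_iff matrix_vector_mult_add_rdistrib scaleR_matrix_vector_assoc
      matrix_vector_right_distrib matrix_vector_mult_scaleR)

lemma matpow_Suc: "matpow M (Suc n) = M ** matpow M n"
  by (simp add: matpow_def)

lemma matpow_Suc_right: "matpow M (Suc n) = matpow M n ** M"
  by (induction n) (simp_all add: matpow_Suc matpow_def matrix_mul_assoc)

lemma matpow_commute: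
  assumes "A ** M = M ** A"
  shows "A ** matpow M n = matpow M n ** A"
proof (induction n)
  case 0
  then show ?case by (simp add: matpow_def)
next
  case (Suc n)
  have "A ** matpow M (Suc n) = M ** (A ** matpow M n)"
    using assms by (simp add: matpow_Suc matrix_mul_assoc)
  also have "\<dots> = matpow M (Suc n) ** A"
    using Suc by (simp add: matpow_Suc matrix_mul_assoc)
  finally show ?case .
qed

lemma norm_matrix_vector_le_mnorm: "norm (M *v x) \<le> mnorm M * norm x"
  unfolding mnorm_def by (rule onorm) simp

lemma abs_matrix_entry_le_norm: "\<bar>M $ i $ j\<bar> \<le> norm (M::real^'n^'m)"
  by (rule order_trans[OF component_le_norm_cart Finite_Cartesian_Product.norm_nth_le])

lemma norm_matrix_le_entry_sum: "norm (M::real^'n^'m) \<le> (\<Sum>i\<in>UNIV. \<Sum>j\<in>UNIV. \<bar>M $ i $ j\<bar>)"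
proof -
  have "norm M = L2_set (\<lambda>i. norm (M $ i)) UNIV" by (simp add: norm_vec_def)
  also have "\<dots> \<le> (\<Sum>i\<in>UNIV. norm (M $ i))" by (rule L2_set_le_sum) auto
  also have "\<dots> \<le> (\<Sum>i\<in>UNIV. \<Sum>j\<in>UNIV. \<bar>M $ i $ j\<bar>)"
    by (intro sum_mono norm_le_l1_cart)
  finally show ?thesis .
qed

text \<open>With the operator norm, square matrices form a Banach algebra in which \<^const>\<open>mexp\<close> is
  the library's \<^const>\<open>exp\<close>.\<close>

typedef (overloaded) ('n::finite) sqmat = "UNIV :: (real^'n^'n) set"
  morphisms to_matrix of_matrix by simp
setup_lifting type_definition_sqmat

instantiation sqmat :: (finite) real_normed_vector
begin
lift_definition norm_sqmat :: "'a sqmat \<Rightarrow> real" is "\<lambda>M. onorm ((*v) M)" .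
lift_definition minus_sqmat :: "'a sqmat \<Rightarrow> 'a sqmat \<Rightarrow> 'a sqmat" is "(-)" .
lift_definition plus_sqmat :: "'a sqmat \<Rightarrow> 'a sqmat \<Rightarrow> 'a sqmat" is "(+)" .
lift_definition uminus_sqmat :: "'a sqmat \<Rightarrow> 'a sqmat" is uminus .
lift_definition zero_sqmat :: "'a sqmat" is 0 .
lift_definition scaleR_sqmat :: "real \<Rightarrow> 'a sqmat \<Rightarrow> 'a sqmat" is scaleR .
definition dist_sqmat :: "'a sqmat \<Rightarrow> 'a sqmat \<Rightarrow> real"
  where "dist_sqmat a b = norm (a - b)"
definition uniformity_sqmat :: "('a sqmat \<times> 'a sqmat) filter"
  where "uniformity_sqmat = (INF e\<in>{0 <..}. principal {(x, y). dist x y < e})"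
definition open_sqmat :: "'a sqmat set \<Rightarrow> bool"
  where "open_sqmat S = (\<forall>x\<in>S. \<forall>\<^sub>F (x', y) in uniformity. x' = x \<longrightarrow> y \<in> S)"
definition sgn_sqmat :: "'a sqmat \<Rightarrow> 'a sqmat"
  where "sgn_sqmat x = inverse (norm x) *\<^sub>R x"
instance
proof
  fix x y z :: "'a sqmat" and a b :: real
  show "x + y + z = x + (y + z)" "x + y = y + x" "0 + x = x" "- x + x = 0" "x - y = x + - y"
    by (transfer; simp add: algebra_simps)+
  show "a *\<^sub>R (x + y) = a *\<^sub>R x + a *\<^sub>R y" "(a + b) *\<^sub>R x = a *\<^sub>R x + b *\<^sub>R x"
    "a *\<^sub>R b *\<^sub>R x = (a * b) *\<^sub>R x" "1 *\<^sub>R x = x"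
    by (transfer; simp add: scaleR_right_distrib scaleR_left_distrib)+
  show "(norm x = 0) = (x = 0)"
    using matrix_eq[of "to_matrix x" 0]
    by (simp add: onorm_eq_0 norm_sqmat.rep_eq zero_sqmat.rep_eq to_matrix_inject[symmetric])
  show "norm (x + y) \<le> norm x + norm y"
  proof transfer
    fix x y :: "real^'a^'a"
    have "(*v) (x + y) = (\<lambda>v. x *v v + y *v v)"
      by (simp add: fun_eq_iff matrix_vector_mult_add_rdistrib)
    then show "onorm ((*v) (x + y)) \<le> onorm ((*v) x) + onorm ((*v) y)"
      by (simp add: onorm_triangle)
  qed
  show "norm (a *\<^sub>R x) = \<bar>a\<bar> * norm x"
  proof transfer
    fix a :: real and x :: "real^'a^'a"
    have "(*v) (a *\<^sub>R x) = (\<lambda>v. a *\<^sub>R (x *v v))"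
      by (simp add: fun_eq_iff scaleR_matrix_vector_assoc)
    then show "onorm ((*v) (a *\<^sub>R x)) = \<bar>a\<bar> * onorm ((*v) x)"
      by (simp add: onorm_scaleR)
  qed
qed (simp_all add: dist_sqmat_def sgn_sqmat_def uniformity_sqmat_def open_sqmat_def)
end

instantiation sqmat :: (finite) ring_1
begin
lift_definition one_sqmat :: "'a sqmat" is "mat 1" .
lift_definition times_sqmat :: "'a sqmat \<Rightarrow> 'a sqmat \<Rightarrow> 'a sqmat" is "(**)" .
instance
proof
  fix x y z :: "'a sqmat"
  show "x * y * z = x * (y * z)" by transfer (simp add: matrix_mul_assoc)
  show "1 * x = x" "x * 1 = x" by (transfer; simp)+
  show "(x + y) * z = x * z + y * z"
    by transfer (rule matrix_add_rdistrib)
  show "x * (y + z) = x * y + x * z"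
    by transfer (simp add: matrix_add_ldistrib)
  show "(0::'a sqmat) \<noteq> 1"
    by transfer (simp add: vec_eq_iff mat_def)
qed
end

instance sqmat :: (finite) real_normed_algebra_1
proof
  fix x y :: "'a sqmat" and a :: real
  show "a *\<^sub>R x * y = a *\<^sub>R (x * y)" "x * a *\<^sub>R y = a *\<^sub>R (x * y)"
    by (transfer; simp add: scalar_matrix_assoc matrix_scalar_ac)+
  show "norm (x * y) \<le> norm x * norm y"
  proof transfer
    fix x y :: "real^'a^'a"
    have "(*v) (x ** y) = (*v) x \<circ> (*v) y"
      by (simp add: fun_eq_iff matrix_vector_mul_assoc)
    then show "onorm ((*v) (x ** y)) \<le> onorm ((*v) x) * onorm ((*v) y)"
      by (simp add: onorm_compose)
  qed
  show "norm (1::'a sqmat) = 1"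
  proof transfer
    have "(*v) (mat 1) = (\<lambda>x::real^'a. x)"
      by (simp add: fun_eq_iff)
    then show "onorm ((*v) (mat 1 :: real^'a^'a)) = 1"
      by (simp add: onorm_id)
  qed
qed

lemma norm_of_matrix: "norm (of_matrix M) = mnorm M"
  by (simp add: norm_sqmat.abs_eq mnorm_def)

lemma bounded_linear_to_matrix: "bounded_linear (to_matrix :: 'n::finite sqmat \<Rightarrow> _)"
proof (rule bounded_linear_intro[where K = "real CARD('n) * real CARD('n)"])
  fix x y :: "'n sqmat" and r :: real
  show "to_matrix (x + y) = to_matrix x + to_matrix y" by (simp add: plus_sqmat.rep_eq)
  show "to_matrix (r *\<^sub>R x) = r *\<^sub>R to_matrix x" by (simp add: scaleR_sqmat.rep_eq)
  have "norm (to_matrix x) \<le> (\<Sum>i\<in>UNIV. \<Sum>j\<in>UNIV. \<bar>to_matrix x $ i $ j\<bar>)"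
    by (rule norm_matrix_le_entry_sum)
  also have "\<dots> \<le> (\<Sum>i\<in>(UNIV::'n set). \<Sum>j\<in>(UNIV::'n set). norm x)"
    by (intro sum_mono) (simp add: norm_sqmat.rep_eq matrix_component_le_onorm)
  finally show "norm (to_matrix x) \<le> norm x * (real CARD('n) * real CARD('n))"
    by (simp add: algebra_simps)
qed

lemma bounded_linear_of_matrix: "bounded_linear (of_matrix :: _ \<Rightarrow> 'n::finite sqmat)"
proof (rule bounded_linear_intro[where K = "real CARD('n) * real CARD('n)"])
  fix x y :: "real^'n^'n" and r :: real
  show "of_matrix (x + y) = (of_matrix x + of_matrix y :: 'n sqmat)" by (simp add: plus_sqmat.abs_eq)
  show "of_matrix (r *\<^sub>R x) = (r *\<^sub>R of_matrix x :: 'n sqmat)" by (simp add: scaleR_sqmat.abs_eq)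
  show "norm (of_matrix x :: 'n sqmat) \<le> norm x * (real CARD('n) * real CARD('n))"
    using onorm_le_matrix_component[of x "norm x"] abs_matrix_entry_le_norm[of x]
    by (simp add: norm_sqmat.abs_eq algebra_simps)
qed

instance sqmat :: (finite) banach
proof
  fix X :: "nat \<Rightarrow> 'a sqmat"
  assume "Cauchy X"
  then have "Cauchy (\<lambda>n. to_matrix (X n))"
    by (rule bounded_linear.Cauchy[OF bounded_linear_to_matrix])
  then obtain L where "(\<lambda>n. to_matrix (X n)) \<longlonglongrightarrow> L"
    using Cauchy_convergent_iff convergent_def by blast
  then have "(\<lambda>n. of_matrix (to_matrix (X n)) :: 'a sqmat) \<longlonglongrightarrow> of_matrix L"
    by (rule bounded_linear.tendsto[OF bounded_linear_of_matrix])
  then show "convergent X"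
    by (auto simp: to_matrix_inverse convergent_def)
qed

lemma to_matrix_power: "to_matrix (of_matrix M ^ k) = matpow M k"
  by (induction k) (simp_all add: matpow_def one_sqmat.rep_eq times_sqmat.rep_eq of_matrix_inverse)

lemma mexp_eq_exp: "mexp M = to_matrix (exp (of_matrix M))"
proof -
  have "to_matrix (exp (of_matrix M)) = (\<Sum>k. to_matrix (of_matrix M ^ k /\<^sub>R fact k))"
    unfolding exp_def by (rule bounded_linear.suminf[OF bounded_linear_to_matrix summable_exp_generic])
  then show ?thesis
    by (simp add: mexp_def to_matrix_power scaleR_sqmat.rep_eq inverse_eq_divide)
qed

lemma mexp_zero [simp]: "mexp (0::real^'n^'n) = mat 1"
  by (simp add: mexp_eq_exp zero_sqmat.abs_eq[symmetric] one_sqmat.rep_eq)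

lemma mnorm_one [simp]: "mnorm (mat 1 :: real^'n^'n) = 1"
  by (metis norm_of_matrix norm_one one_sqmat.abs_eq)

lemma has_vector_derivative_mexp_backward:
  fixes A :: "real^'n^'n"
  shows "((\<lambda>s. mexp ((t - s) *\<^sub>R A)) has_vector_derivative - (mexp ((t - s) *\<^sub>R A) ** A))
           (at s within S)"
proof -
  have "((\<lambda>s. t - s) has_vector_derivative -1) (at s within S)"
    by (auto intro!: derivative_eq_intros simp: has_real_derivative_iff_has_vector_derivative[symmetric])
  from vector_diff_chain_within[OF this exp_scaleR_has_vector_derivative_right]
  have "((\<lambda>s. exp ((t - s) *\<^sub>R of_matrix A :: 'n sqmat)) has_vector_derivative
      - (exp ((t - s) *\<^sub>R of_matrix A) * of_matrix A)) (at s within S)"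
    by (simp add: o_def has_vector_derivative_at_within)
  from bounded_linear.has_vector_derivative[OF bounded_linear_to_matrix this]
  show ?thesis
    by (simp add: mexp_eq_exp scaleR_sqmat.abs_eq[symmetric] times_sqmat.rep_eq of_matrix_inverse
        uminus_sqmat.rep_eq)
qed

lemma continuous_mexp_backward:
  "continuous (at s within S) (\<lambda>s. mexp ((t - s) *\<^sub>R A))" for A :: "real^'n^'n"
  by (rule has_vector_derivative_continuous[OF has_vector_derivative_mexp_backward])

section \<open>Functions with jumps and a majorant\<close>

lemma nonincreasing_between_jumps:
  fixes r :: "real \<Rightarrow> real"
  assumes "x < y"
    and deriv: "\<And>s. x < s \<Longrightarrow> s < y \<Longrightarrow> \<exists>d. (r has_real_derivative d) (at s) \<and> d \<le> 0"
    and left: "continuous (at_left y) r"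
    and right: "(r \<longlongrightarrow> L) (at_right x)" "L \<le> r x"
  shows "r y \<le> r x"
proof -
  have inner: "r b \<le> r a" if "x < a" "a \<le> b" "b < y" for a b
    using DERIV_nonpos_imp_nonincreasing[of a b r] deriv that by force
  have "r y \<le> r a" if "x < a" "a < y" for a
  proof (rule tendsto_upperbound)
    show "(r \<longlongrightarrow> r y) (at_left y)" using left by (simp add: continuous_within)
    show "eventually (\<lambda>b. r b \<le> r a) (at_left y)"
      using eventually_at_left_real[OF \<open>a < y\<close>] by eventually_elim (use inner that in auto)
  qed simp
  then have "r y \<le> L"
    by (intro tendsto_lowerbound[OF right(1)] eventually_mono[OF eventually_at_right_real[OF \<open>x < y\<close>]])
      auto
  with right(2) show ?thesis by simp
qed

lemma nonincreasing_piecewise: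
  fixes r :: "real \<Rightarrow> real"
  assumes "t0 \<le> t" "finite J"
    and deriv: "\<And>s. s \<in> {t0..<t} - J \<Longrightarrow> \<exists>d. (r has_real_derivative d) (at s) \<and> d \<le> 0"
    and left: "\<And>s. s \<in> {t0<..t} \<Longrightarrow> continuous (at_left s) r"
    and jump: "\<And>s. s \<in> {t0..<t} \<inter> J \<Longrightarrow> \<exists>L. (r \<longlongrightarrow> L) (at_right s) \<and> L \<le> r s"
  shows "r t \<le> r t0"
proof -
  have right: "\<exists>L. (r \<longlongrightarrow> L) (at_right s) \<and> L \<le> r s" if "s \<in> {t0..<t}" for s
  proof (cases "s \<in> J")
    case False
    with deriv that obtain d where "(r has_real_derivative d) (at s)" by blast
    then have "(r \<longlongrightarrow> r s) (at s)"
      using DERIV_isCont isCont_def by blast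
    then show ?thesis by (auto simp: filterlim_at_split)
  qed (use jump that in blast)
  have step: "r y \<le> r x" if xy: "t0 \<le> x" "x < y" "y \<le> t" and gap: "J \<inter> {x<..<y} = {}" for x y
  proof -
    obtain L where "(r \<longlongrightarrow> L) (at_right x)" "L \<le> r x" using right[of x] xy by auto
    then show ?thesis
    proof (rule nonincreasing_between_jumps[rotated 3])
      show "x < y" by fact
      show "continuous (at_left y) r" using xy by (intro left) simp
      show "\<exists>d. (r has_real_derivative d) (at s) \<and> d \<le> 0" if "x < s" "s < y" for s
        using that xy gap by (intro deriv) auto
    qed
  qed
  have "r y \<le> r t0" if "y \<in> {t0..t}" "card (J \<inter> {t0<..<y}) = n" for y n
    using that
  proof (induction n arbitrary: y rule: less_induct)
    case (less n)
    show ?case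
    proof (cases "J \<inter> {t0<..<y} = {}")
      case True
      with less.prems step[of t0 y] show ?thesis by (cases "t0 = y") auto
    next
      case False
      define j where "j = Max (J \<inter> {t0<..<y})"
      have fin: "finite (J \<inter> {t0<..<y})" using \<open>finite J\<close> by simp
      have j: "j \<in> J" "t0 < j" "j < y" using Max_in[OF fin False] by (auto simp: j_def)
      have "J \<inter> {j<..<y} = {}"
        using Max_ge[OF fin] j(2) unfolding j_def[symmetric] by fastforce
      then have "r y \<le> r j" using step[of j y] j less.prems by auto
      moreover have "J \<inter> {t0<..<j} \<subset> J \<inter> {t0<..<y}" using j by auto
      then have "card (J \<inter> {t0<..<j}) < n"
        using less.prems by (metis fin psubset_card_mono)
      then have "r j \<le> r t0" using less.IH j less.prems by auto
      ultimately show ?thesis by simp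
    qed
  qed
  then show ?thesis using assms(1) by auto
qed

lemma norm_increment_le_majorant:
  fixes v :: "real \<Rightarrow> 'a::real_inner" and \<Phi> :: "real \<Rightarrow> real"
  assumes "t0 \<le> t" "finite J"
    and deriv: "\<And>s. s \<in> {t0..<t} - J \<Longrightarrow> (v has_vector_derivative v' s) (at s) \<and>
                  (\<Phi> has_real_derivative \<Phi>' s) (at s) \<and> norm (v' s) \<le> \<Phi>' s"
    and left: "\<And>s. s \<in> {t0<..t} \<Longrightarrow> continuous (at_left s) v \<and> continuous (at_left s) \<Phi>"
    and jump: "\<And>s. s \<in> {t0..<t} \<inter> J \<Longrightarrow> \<exists>a b. (v \<longlongrightarrow> a) (at_right s) \<and> (\<Phi> \<longlongrightarrow> b) (at_right s) \<and>
                  norm (a - v s) \<le> b - \<Phi> s"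
  shows "norm (v t - v t0) \<le> \<Phi> t - \<Phi> t0"
proof -
  define u where "u = sgn (v t - v t0)"
  have u: "norm u \<le> 1" by (simp add: u_def norm_sgn)
  have inner_le: "x \<bullet> u \<le> norm x" for x
    using norm_cauchy_schwarz[of x u] mult_left_le[OF u norm_ge_zero[of x]] by linarith
  define r where "r s = v s \<bullet> u - \<Phi> s" for s
  have "r t \<le> r t0"
  proof (rule nonincreasing_piecewise[OF assms(1,2)])
    fix s assume s: "s \<in> {t0..<t} - J"
    with deriv have v: "(v has_vector_derivative v' s) (at s)"
      and \<Phi>: "(\<Phi> has_real_derivative \<Phi>' s) (at s)" by blast+
    have "((\<lambda>s. v s \<bullet> u) has_real_derivative v' s \<bullet> u) (at s)"
      unfolding has_real_derivative_iff_has_vector_derivative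
      by (rule bounded_linear.has_vector_derivative[OF bounded_linear_inner_left v])
    then have "(r has_real_derivative v' s \<bullet> u - \<Phi>' s) (at s)"
      unfolding r_def by (rule DERIV_diff[OF _ \<Phi>])
    moreover have "v' s \<bullet> u - \<Phi>' s \<le> 0" using deriv[OF s] inner_le[of "v' s"] by linarith
    ultimately show "\<exists>d. (r has_real_derivative d) (at s) \<and> d \<le> 0" by blast
  next
    fix s assume "s \<in> {t0<..t}"
    with left show "continuous (at_left s) r" unfolding r_def by (intro continuous_intros) auto
  next
    fix s assume "s \<in> {t0..<t} \<inter> J"
    with jump obtain a b where ab: "(v \<longlongrightarrow> a) (at_right s)" "(\<Phi> \<longlongrightarrow> b) (at_right s)"
      "norm (a - v s) \<le> b - \<Phi> s" by blast
    have "(r \<longlongrightarrow> a \<bullet> u - b) (at_right s)" unfolding r_def by (intro tendsto_intros ab)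
    moreover have "a \<bullet> u - b \<le> r s"
      using inner_le[of "a - v s"] ab(3) by (simp add: r_def inner_diff_left)
    ultimately show "\<exists>L. (r \<longlongrightarrow> L) (at_right s) \<and> L \<le> r s" by blast
  qed
  moreover have "(v t - v t0) \<bullet> u = norm (v t - v t0)"
    by (cases "v t = v t0")
      (simp_all add: u_def sgn_div_norm power2_norm_eq_inner[symmetric] power2_eq_square)
  ultimately show ?thesis by (simp add: r_def inner_diff_left)
qed

section \<open>An exponentially weighted supremum norm\<close>

lemma exp_decay_at_bot:
  fixes lam t :: real
  assumes "lam > 0"
  shows "((\<lambda>s. exp (- lam * (t - s))) \<longlongrightarrow> 0) at_bot"
proof -
  have "filterlim (\<lambda>s. lam * s) at_bot at_bot"
    using filterlim_tendsto_pos_mult_at_bot[OF tendsto_const assms filterlim_ident] .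
  from filterlim_compose[OF exp_at_bot this]
  have "((\<lambda>s. exp (- lam * t) * exp (lam * s)) \<longlongrightarrow> 0) at_bot"
    by (rule tendsto_mult_right_zero)
  then show ?thesis by (simp add: exp_add[symmetric] algebra_simps)
qed

lemma exp_weighted_decay_le:
  fixes s t \<mu> lam N C X :: real
  assumes "s \<le> t" "\<mu> \<le> lam" "0 \<le> N" "0 \<le> C" "X \<le> C * exp ((lam - \<mu>) * \<bar>s\<bar>)"
  shows "N * exp (- lam * (t - s)) * X \<le> N * C * exp ((lam - \<mu>) * \<bar>t\<bar>) * exp (- \<mu> * (t - s))"
proof -
  have "(lam - \<mu>) * \<bar>s\<bar> \<le> (lam - \<mu>) * (\<bar>t\<bar> + (t - s))"
    using assms(1,2) by (intro mult_left_mono) auto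
  then have "exp (- lam * (t - s)) * exp ((lam - \<mu>) * \<bar>s\<bar>) \<le> exp ((lam - \<mu>) * \<bar>t\<bar>) * exp (- \<mu> * (t - s))"
    by (simp add: exp_add[symmetric] algebra_simps)
  from mult_left_mono[OF this, of "N * C"] assms(3,4)
  have "N * exp (- lam * (t - s)) * (C * exp ((lam - \<mu>) * \<bar>s\<bar>))
      \<le> N * C * exp ((lam - \<mu>) * \<bar>t\<bar>) * exp (- \<mu> * (t - s))"
    by (simp add: ac_simps)
  moreover have "N * exp (- lam * (t - s)) * X \<le> N * exp (- lam * (t - s)) * (C * exp ((lam - \<mu>) * \<bar>s\<bar>))"
    using assms(3,5) by (intro mult_left_mono) auto
  ultimately show ?thesis by linarith
qed

lemma contraction_rate_below:
  fixes \<omega> lam N Lf Lh :: real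
  assumes "\<omega> > 0" "lam > 0" "N * (Lf / lam + real p * Lh / (1 - exp (- lam * \<omega>))) < 1"
  obtains \<mu> where "0 < \<mu>" "\<mu> < lam" "N * (Lf / \<mu> + real p * Lh / (1 - exp (- \<mu> * \<omega>))) < 1"
proof -
  define q where "q x = N * (Lf / x + real p * Lh / (1 - exp (- x * \<omega>)))" for x
  have "isCont q lam"
    unfolding q_def using assms(1,2) by (intro continuous_intros) auto
  then have "eventually (\<lambda>x. q x < 1) (at_left lam)"
    using assms(3) by (metis isCont_def order_tendstoD(2) q_def tendsto_within_subset top_greatest)
  moreover have "eventually (\<lambda>x. x \<in> {0<..<lam}) (at_left lam)"
    using assms(2) by (rule eventually_at_left_real)
  ultimately obtain \<mu> where "q \<mu> < 1" "\<mu> \<in> {0<..<lam}"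
    using eventually_happens'[of "at_left lam"] by (metis (mono_tags) eventually_conj_iff trivial_limit_at_left_real)
  then show ?thesis using that by (auto simp: q_def)
qed

definition weighted_sup :: "real \<Rightarrow> (real \<Rightarrow> 'a::real_normed_vector) \<Rightarrow> real" where
  "weighted_sup \<gamma> w = (SUP s. norm (w s) * exp (- \<gamma> * \<bar>s\<bar>))"

lemma norm_le_weighted_sup:
  assumes "bounded (range w)" "\<gamma> \<ge> 0"
  shows "norm (w s) \<le> weighted_sup \<gamma> w * exp (\<gamma> * \<bar>s\<bar>)"
proof -
  obtain M where M: "\<And>s. norm (w s) \<le> M" using assms(1) by (auto simp: bounded_iff)
  have "norm (w s) * exp (- \<gamma> * \<bar>s\<bar>) \<le> M" for s
    using M[of s] mult_left_le[of "exp (- \<gamma> * \<bar>s\<bar>)" "norm (w s)"] assms(2) by force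
  then have "norm (w s) * exp (- \<gamma> * \<bar>s\<bar>) \<le> weighted_sup \<gamma> w"
    unfolding weighted_sup_def by (intro cSUP_upper bdd_aboveI2) auto
  then show ?thesis by (simp add: exp_minus field_simps)
qed

lemma weighted_sup_nonneg:
  assumes "bounded (range w)" "\<gamma> \<ge> 0"
  shows "0 \<le> weighted_sup \<gamma> w"
  by (rule order_trans[OF norm_ge_zero]) (use norm_le_weighted_sup[OF assms, of 0] in simp)

lemma weighted_sup_le:
  assumes "\<And>s. norm (w s) \<le> C * exp (\<gamma> * \<bar>s\<bar>)"
  shows "weighted_sup \<gamma> w \<le> C"
  unfolding weighted_sup_def
proof (rule cSUP_least)
  show "norm (w s) * exp (- \<gamma> * \<bar>s\<bar>) \<le> C" for s
    using assms[of s] by (simp add: exp_minus field_simps)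
qed simp

lemma weighted_sup_tendsto_zero:
  assumes "\<gamma> > 0" "\<And>n s. norm (e n s) \<le> M"
    and "\<And>R. uniform_limit {-R..R} e (\<lambda>_. 0) sequentially"
  shows "(\<lambda>n. weighted_sup \<gamma> (e n)) \<longlonglongrightarrow> 0"
proof (rule tendstoI)
  fix \<epsilon> :: real assume "\<epsilon> > 0"
  have "M \<ge> 0" using assms(2)[of 0 0] norm_ge_zero[of "e 0 0"] by linarith
  define R where "R = 2 * M / (\<epsilon> * \<gamma>)"
  have "M \<le> \<epsilon> / 2 * (\<gamma> * R)" using \<open>\<epsilon> > 0\<close> assms(1) by (simp add: R_def)
  also have "\<dots> \<le> \<epsilon> / 2 * exp (\<gamma> * R)"
    using \<open>\<epsilon> > 0\<close> exp_ge_add_one_self[of "\<gamma> * R"] by (intro mult_left_mono) linarith+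
  also have "\<dots> \<le> \<epsilon> / 2 * exp (\<gamma> * \<bar>s\<bar>)" if "R \<le> \<bar>s\<bar>" for s
    using that assms(1) \<open>\<epsilon> > 0\<close> by (intro mult_left_mono) auto
  finally have far: "M \<le> \<epsilon> / 2 * exp (\<gamma> * \<bar>s\<bar>)" if "R \<le> \<bar>s\<bar>" for s
    using that by blast
  have "eventually (\<lambda>n. \<forall>s\<in>{-R..R}. dist (e n s) 0 < \<epsilon> / 2) sequentially"
    using assms(3)[of R] half_gt_zero[OF \<open>\<epsilon> > 0\<close>] unfolding uniform_limit_iff by blast
  then show "eventually (\<lambda>n. dist (weighted_sup \<gamma> (e n)) 0 < \<epsilon>) sequentially"
  proof eventually_elim
    case (elim n)
    have "norm (e n s) \<le> \<epsilon> / 2 * exp (\<gamma> * \<bar>s\<bar>)" for s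
    proof (cases "\<bar>s\<bar> \<le> R")
      case True
      then have "norm (e n s) \<le> \<epsilon> / 2" using elim by (auto simp: abs_le_iff less_imp_le)
      also have "\<dots> \<le> \<epsilon> / 2 * exp (\<gamma> * \<bar>s\<bar>)" using \<open>\<epsilon> > 0\<close> assms(1) by simp
      finally show ?thesis .
    next
      case False
      then show ?thesis using far[of s] assms(2)[of n s] by linarith
    qed
    then have "weighted_sup \<gamma> (e n) \<le> \<epsilon> / 2" by (rule weighted_sup_le)
    moreover have "0 \<le> weighted_sup \<gamma> (e n)"
      using assms(1,2) by (intro weighted_sup_nonneg) (auto simp: bounded_iff)
    ultimately show ?case using \<open>\<epsilon> > 0\<close> by simp
  qed
qed

lemma uniform_limit_compact_weighted_sup:
  assumes "(\<lambda>n. weighted_sup \<gamma> (w n)) \<longlonglongrightarrow> 0" "\<And>n. bounded (range (w n))" "\<gamma> \<ge> 0" "compact K"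
  shows "uniform_limit K w (\<lambda>_. 0) sequentially"
  unfolding uniform_limit_iff
proof (intro allI impI)
  fix \<epsilon> :: real assume "\<epsilon> > 0"
  obtain R where R: "\<And>t. t \<in> K \<Longrightarrow> \<bar>t\<bar> \<le> R"
    using compact_imp_bounded[OF assms(4)] by (auto simp: bounded_iff)
  have "eventually (\<lambda>n. weighted_sup \<gamma> (w n) < \<epsilon> / exp (\<gamma> * R)) sequentially"
    using order_tendstoD(2)[OF assms(1)] \<open>\<epsilon> > 0\<close> by simp
  then show "eventually (\<lambda>n. \<forall>t\<in>K. dist (w n t) 0 < \<epsilon>) sequentially"
  proof eventually_elim
    case (elim n)
    show ?case
    proof
      fix t assume "t \<in> K"
      have "norm (w n t) \<le> weighted_sup \<gamma> (w n) * exp (\<gamma> * \<bar>t\<bar>)"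
        by (rule norm_le_weighted_sup[OF assms(2,3)])
      also have "\<dots> \<le> weighted_sup \<gamma> (w n) * exp (\<gamma> * R)"
        using R[OF \<open>t \<in> K\<close>] assms(3) weighted_sup_nonneg[OF assms(2,3), of n]
        by (intro mult_left_mono) (auto intro: mult_left_mono)
      also have "\<dots> < \<epsilon>" using elim by (simp add: field_simps)
      finally show "dist (w n t) 0 < \<epsilon>" by simp
    qed
  qed
qed

section \<open>Shifted and subtracted solutions\<close>

lemma periodic_multiple:
  assumes "\<And>t. u (t + \<omega>) = u t"
  shows "u (t + real m * \<omega>) = u t"
proof (induction m)
  case (Suc m)
  then show ?case using assms[of "t + real m * \<omega>"] by (simp add: algebra_simps)
qed simp

lemma at_left_shift: "at_left (a + d) = filtermap (\<lambda>x. x + d) (at_left a)" for a d :: real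
proof -
  have "nhds (a + d) = filtermap (\<lambda>x. x + d) (nhds a)"
    using filtermap_nhds_shift[of "- d" a] by simp
  then show ?thesis by (simp add: filter_eq_iff eventually_filtermap eventually_at_filter)
qed

lemma at_right_shift: "at_right (a + d) = filtermap (\<lambda>x. x + d) (at_right a)" for a d :: real
  using filtermap_at_right_shift[of "- d" a] by simp

lemma impulsive_solution_shift:
  assumes sol: "impulsive_solution A B f g h \<theta> x"
    and f_per: "\<And>t y. f (t + T) y = f t y"
    and \<theta>_shift: "\<And>k. \<theta> (k + j) = \<theta> k + T"
  shows "impulsive_solution A B f (\<lambda>t. g (t + T)) h \<theta> (\<lambda>t. x (t + T))"
  unfolding impulsive_solution_def
proof (intro conjI allI impI)
  fix s assume "s \<notin> range \<theta>"
  have "s + T \<notin> range \<theta>"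
  proof
    assume "s + T \<in> range \<theta>"
    then obtain i where "s + T = \<theta> i" by auto
    then have "s = \<theta> (i - j)" using \<theta>_shift[of "i - j"] by simp
    with \<open>s \<notin> range \<theta>\<close> show False by auto
  qed
  with sol have "(x has_vector_derivative A *v x (s + T) + f (s + T) (x (s + T)) + g (s + T)) (at (s + T))"
    by (simp add: impulsive_solution_def)
  moreover have "((\<lambda>s. s + T) has_vector_derivative 1) (at s)"
    by (auto intro!: derivative_eq_intros simp flip: has_real_derivative_iff_has_vector_derivative)
  ultimately show "((\<lambda>t. x (t + T)) has_vector_derivative
      A *v x (s + T) + f s (x (s + T)) + g (s + T)) (at s)"
    using vector_diff_chain_at[of "\<lambda>s. s + T" 1 s x] f_per by (simp add: o_def)
next
  fix k
  have "(x \<longlongrightarrow> x (\<theta> k + T)) (at_left (\<theta> k + T))" and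
    lim: "(x \<longlongrightarrow> x (\<theta> k + T) + B *v x (\<theta> k + T) + h (x (\<theta> k + T))) (at_right (\<theta> k + T))"
    using sol by (auto simp: impulsive_solution_def continuous_within simp flip: \<theta>_shift)
  then show "continuous (at_left (\<theta> k)) (\<lambda>t. x (t + T))"
    unfolding continuous_within by (simp add: at_left_shift filterlim_filtermap)
  show "((\<lambda>t. x (t + T)) \<longlongrightarrow> x (\<theta> k + T) + B *v x (\<theta> k + T) + h (x (\<theta> k + T))) (at_right (\<theta> k))"
    using lim by (simp add: at_right_shift filterlim_filtermap)
qed

lemma impulsive_solution_diff:
  assumes sol1: "impulsive_solution A B f g1 h \<theta> x1" and sol2: "impulsive_solution A B f g2 h \<theta> x2"
  shows "\<And>s. s \<notin> range \<theta> \<Longrightarrow> ((\<lambda>s. x1 s - x2 s) has_vector_derivative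
           A *v (x1 s - x2 s) + ((f s (x1 s) - f s (x2 s)) + (g1 s - g2 s))) (at s)"
    and "\<And>k. continuous (at_left (\<theta> k)) (\<lambda>s. x1 s - x2 s)"
    and "\<And>k. ((\<lambda>s. x1 s - x2 s) \<longlongrightarrow> (x1 (\<theta> k) - x2 (\<theta> k)) + B *v (x1 (\<theta> k) - x2 (\<theta> k))
           + (h (x1 (\<theta> k)) - h (x2 (\<theta> k)))) (at_right (\<theta> k))"
proof -
  fix s assume "s \<notin> range \<theta>"
  with sol1 sol2 show "((\<lambda>s. x1 s - x2 s) has_vector_derivative
      A *v (x1 s - x2 s) + ((f s (x1 s) - f s (x2 s)) + (g1 s - g2 s))) (at s)"
    unfolding impulsive_solution_def
    by (auto dest!: spec[of _ s] intro!: derivative_eq_intros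
        simp: matrix_vector_mult_diff_distrib algebra_simps)
next
  fix k
  show "continuous (at_left (\<theta> k)) (\<lambda>s. x1 s - x2 s)"
    using sol1 sol2 by (auto simp: impulsive_solution_def intro: continuous_diff)
  show "((\<lambda>s. x1 s - x2 s) \<longlongrightarrow> (x1 (\<theta> k) - x2 (\<theta> k)) + B *v (x1 (\<theta> k) - x2 (\<theta> k))
      + (h (x1 (\<theta> k)) - h (x2 (\<theta> k)))) (at_right (\<theta> k))"
    using sol1 sol2 unfolding impulsive_solution_def
    by (auto dest!: spec[of _ k] dest: tendsto_diff simp: matrix_vector_mult_diff_distrib algebra_simps)
qed

section \<open>Impulse moments\<close>

locale impulse_moments =
  fixes \<theta> :: "int \<Rightarrow> real" and p :: nat and \<omega> :: real
  assumes strict_mono: "strict_mono \<theta>"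
    and periodic: "\<And>k. \<theta> (k + int p) = \<theta> k + \<omega>"
    and period_pos: "\<omega> > 0"
begin

lemma less_iff [simp]: "\<theta> a < \<theta> b \<longleftrightarrow> a < b"
  using strict_mono by (simp add: strict_mono_less)

lemma le_iff [simp]: "\<theta> a \<le> \<theta> b \<longleftrightarrow> a \<le> b"
  using strict_mono by (simp add: strict_mono_less_eq)

lemma shift_periods_nat: "\<theta> (k + int j * int p) = \<theta> k + real j * \<omega>"
proof (induction j)
  case (Suc j)
  have "\<theta> (k + int (Suc j) * int p) = \<theta> (k + int j * int p) + \<omega>"
    using periodic[of "k + int j * int p"] by (simp add: algebra_simps)
  with Suc show ?case by (simp add: algebra_simps)
qed simp

lemma shift_periods: "\<theta> (k + j * int p) = \<theta> k + of_int j * \<omega>"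
proof (cases "j \<ge> 0")
  case True
  then show ?thesis using shift_periods_nat[of k "nat j"] by simp
next
  case False
  then show ?thesis using shift_periods_nat[of "k + j * int p" "nat (- j)"] by simp
qed

lemma exists_below: "\<exists>k. \<theta> k < x"
proof -
  obtain j :: nat where "real j > (\<theta> 0 - x) / \<omega>" using reals_Archimedean2 by blast
  then have "\<theta> (0 + (- int j) * int p) < x" using shift_periods[of 0 "- int j"] period_pos
    by (simp add: field_simps)
  then show ?thesis by blast
qed

lemma exists_above: "\<exists>k. x < \<theta> k"
proof -
  obtain j :: nat where "real j > (x - \<theta> 0) / \<omega>" using reals_Archimedean2 by blast
  then have "x < \<theta> (0 + int j * int p)" using shift_periods_nat[of 0 j] period_pos
    by (simp add: field_simps)
  then show ?thesis by blast
qed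

lemma finite_indices_between:
  assumes "\<And>k. P k \<Longrightarrow> a \<le> \<theta> k \<and> \<theta> k \<le> b"
  shows "finite {k. P k}"
proof -
  obtain k1 k2 where "\<theta> k1 < a" "b < \<theta> k2" using exists_below exists_above by blast
  with assms have "{k. P k} \<subseteq> {k1..k2}"
    by (force simp flip: le_iff intro: less_imp_le)
  then show ?thesis by (rule finite_subset) simp
qed

lemma impulse_interval: obtains k where "\<theta> k < s" "s \<le> \<theta> (k + 1)"
proof -
  obtain k1 k2 where k12: "\<theta> k1 < s" "s < \<theta> k2" using exists_below exists_above by blast
  define K where "K = {k1..k2} \<inter> {k. \<theta> k < s}"
  have "finite K" by (simp add: K_def)
  have "\<theta> k1 < \<theta> k2" using k12 by linarith
  then have "k1 \<in> K" using k12 by (simp add: K_def)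
  then have "Max K \<in> K" using \<open>finite K\<close> by (metis Max_in empty_iff)
  moreover have "Max K + 1 \<notin> K" using \<open>finite K\<close> by (metis Max_ge less_add_one not_le)
  moreover have "Max K < k2" using \<open>Max K \<in> K\<close> k12 by (auto simp: K_def simp flip: less_iff)
  ultimately show ?thesis using that[of "Max K"] by (auto simp: K_def)
qed

lemma card_window_le: "card {k. a \<le> \<theta> k \<and> \<theta> k < a + \<omega>} \<le> p"
proof (cases "{k. a \<le> \<theta> k \<and> \<theta> k < a + \<omega>} = {}")
  case False
  define S where "S = {k. a \<le> \<theta> k \<and> \<theta> k < a + \<omega>}"
  have "finite S" unfolding S_def by (rule finite_indices_between[where b = "a + \<omega>"]) auto
  define m where "m = Min S"
  have "m \<in> S" using Min_in[OF \<open>finite S\<close>] False by (simp add: m_def S_def)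
  have "S \<subseteq> {m..<m + int p}"
  proof
    fix k assume "k \<in> S"
    have "\<theta> k < \<theta> (m + int p)" using \<open>k \<in> S\<close> \<open>m \<in> S\<close> periodic[of m] by (simp add: S_def)
    then show "k \<in> {m..<m + int p}" using Min_le[OF \<open>finite S\<close> \<open>k \<in> S\<close>] by (simp add: m_def)
  qed
  then have "card S \<le> card {m..<m + int p}" by (rule card_mono[rotated]) simp
  then show ?thesis by (simp add: S_def)
qed (metis card.empty le0)

definition impulse_sum :: "(int \<Rightarrow> real) \<Rightarrow> real \<Rightarrow> real \<Rightarrow> real" where
  "impulse_sum c t0 s = (\<Sum>k | t0 \<le> \<theta> k \<and> \<theta> k < s. c k)"

lemma impulse_sum_start [simp]: "impulse_sum c t0 t0 = 0"
proof -
  have "{k. t0 \<le> \<theta> k \<and> \<theta> k < t0} = {}" by auto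
  then show ?thesis by (simp only: impulse_sum_def sum.empty)
qed

lemma impulse_sum_piece:
  assumes "\<theta> k < s" "s \<le> \<theta> (k + 1)"
  shows "impulse_sum c t0 s = impulse_sum c t0 (\<theta> (k + 1))"
proof -
  have "\<theta> j < s \<longleftrightarrow> \<theta> j < \<theta> (k + 1)" for j
    using assms less_iff[of j k] by (smt (verit, best) le_iff zle_add1_eq_le)
  then show ?thesis by (simp add: impulse_sum_def)
qed

lemma impulse_sum_jump:
  assumes "t0 \<le> \<theta> k"
  shows "impulse_sum c t0 (\<theta> (k + 1)) = impulse_sum c t0 (\<theta> k) + c k"
proof -
  have "{j. t0 \<le> \<theta> j \<and> \<theta> j < \<theta> (k + 1)} = insert k {j. t0 \<le> \<theta> j \<and> \<theta> j < \<theta> k}"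
    using assms by auto
  moreover have "finite {j. t0 \<le> \<theta> j \<and> \<theta> j < \<theta> k}"
    by (rule finite_indices_between[where b = "\<theta> k"]) auto
  ultimately show ?thesis by (simp add: impulse_sum_def)
qed

lemma impulse_sum_continuous_left: "continuous (at_left s) (impulse_sum c t0)"
proof -
  obtain k where k: "\<theta> k < s" "s \<le> \<theta> (k + 1)" by (rule impulse_interval)
  have "eventually (\<lambda>s'. impulse_sum c t0 s' = impulse_sum c t0 s) (at_left s)"
    using eventually_at_left_real[OF k(1)]
  proof eventually_elim
    case (elim s')
    then show ?case using impulse_sum_piece[of k s' c t0] impulse_sum_piece[OF k, of c t0] k by simp
  qed
  then show ?thesis
    unfolding continuous_within by (rule tendsto_eventually)
qed

lemma impulse_sum_right_limit:
  assumes "t0 \<le> \<theta> k"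
  shows "(impulse_sum c t0 \<longlongrightarrow> impulse_sum c t0 (\<theta> k) + c k) (at_right (\<theta> k))"
proof (rule tendsto_eventually)
  show "eventually (\<lambda>s. impulse_sum c t0 s = impulse_sum c t0 (\<theta> k) + c k) (at_right (\<theta> k))"
    using eventually_at_right_real[of "\<theta> k" "\<theta> (k + 1)"]
    by (rule eventually_mono) (use impulse_sum_piece impulse_sum_jump[OF assms] in auto)
qed

lemma impulse_sum_locally_constant:
  assumes "s \<notin> range \<theta>"
  shows "eventually (\<lambda>s'. impulse_sum c t0 s' = impulse_sum c t0 s) (nhds s)"
proof -
  obtain k where k: "\<theta> k < s" "s \<le> \<theta> (k + 1)" by (rule impulse_interval)
  with assms have "s \<in> {\<theta> k<..<\<theta> (k + 1)}" by (auto simp: order.order_iff_strict)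
  then have "eventually (\<lambda>s'. s' \<in> {\<theta> k<..<\<theta> (k + 1)}) (nhds s)"
    by (intro eventually_nhds_in_open) auto
  then show ?thesis
    by eventually_elim (use k impulse_sum_piece in auto)
qed

lemma impulse_majorant_has_derivative:
  assumes "s \<notin> range \<theta>" "\<mu> \<noteq> 0"
  shows "((\<lambda>s. C1 * exp (- \<mu> * (t - s)) / \<mu> + C2 * impulse_sum c t0 s)
           has_real_derivative C1 * exp (- \<mu> * (t - s))) (at s)"
proof -
  have "eventually (\<lambda>s'. C1 * exp (- \<mu> * (t - s')) / \<mu> + C2 * impulse_sum c t0 s'
      = C1 * exp (- \<mu> * (t - s')) / \<mu> + C2 * impulse_sum c t0 s) (nhds s)"
    using impulse_sum_locally_constant[OF assms(1), of c t0] by eventually_elim simp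
  from DERIV_cong_ev[OF refl this refl]
  show ?thesis using assms(2) by (auto intro!: derivative_eq_intros)
qed

lemma impulse_sum_exp_le:
  assumes "\<mu> > 0"
  shows "impulse_sum (\<lambda>k. exp (- \<mu> * (t - \<theta> k))) t0 t \<le> real p / (1 - exp (- \<mu> * \<omega>))"
proof -
  define r where "r = exp (- \<mu> * \<omega>)"
  have r: "0 < r" "r < 1" using assms period_pos by (auto simp: r_def)
  define F where "F t = impulse_sum (\<lambda>k. exp (- \<mu> * (t - \<theta> k))) t0 t" for t
  have "F t \<le> real p / (1 - r)" if "t - t0 \<le> real n * \<omega>" for n t
    using that
  proof (induction n arbitrary: t)
    case 0
    then have "{k. t0 \<le> \<theta> k \<and> \<theta> k < t} = {}" by auto
    then have "F t = 0" by (simp only: F_def impulse_sum_def sum.empty)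
    then show ?case using r by simp
  next
    case (Suc n)
    define S1 where "S1 = {k. t0 \<le> \<theta> k \<and> \<theta> k < t - \<omega>}"
    define S2 where "S2 = {k. t0 \<le> \<theta> k \<and> \<theta> k < t \<and> t - \<omega> \<le> \<theta> k}"
    have split: "{k. t0 \<le> \<theta> k \<and> \<theta> k < t} = S1 \<union> S2" "S1 \<inter> S2 = {}"
      using period_pos by (auto simp: S1_def S2_def)
    have fin1: "finite S1"
      unfolding S1_def by (rule finite_indices_between[where b = t]) (use period_pos in auto)
    have fin2: "finite S2"
      unfolding S2_def by (rule finite_indices_between[where b = t]) auto
    have "F t = (\<Sum>k\<in>S1. exp (- \<mu> * (t - \<theta> k))) + (\<Sum>k\<in>S2. exp (- \<mu> * (t - \<theta> k)))"
      unfolding F_def impulse_sum_def split(1) by (rule sum.union_disjoint[OF fin1 fin2 split(2)])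
    also have "(\<Sum>k\<in>S1. exp (- \<mu> * (t - \<theta> k))) = r * F (t - \<omega>)"
      unfolding F_def impulse_sum_def S1_def r_def sum_distrib_left
      by (rule sum.cong) (auto simp: exp_add[symmetric] algebra_simps)
    also have "(\<Sum>k\<in>S2. exp (- \<mu> * (t - \<theta> k))) \<le> card S2"
      using sum_mono[of S2 "\<lambda>k. exp (- \<mu> * (t - \<theta> k))" "\<lambda>_. 1"] assms
      by (simp add: S2_def)
    also have "card S2 \<le> card {k. t - \<omega> \<le> \<theta> k \<and> \<theta> k < t - \<omega> + \<omega>}"
      by (rule card_mono, rule finite_indices_between[where b = t]) (auto simp: S2_def)
    also have "\<dots> \<le> p" by (rule card_window_le)
    finally have "F t \<le> r * F (t - \<omega>) + real p" by simp
    also have "F (t - \<omega>) \<le> real p / (1 - r)"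
      using Suc by (auto simp: algebra_simps)
    then have "r * F (t - \<omega>) + real p \<le> r * (real p / (1 - r)) + real p"
      using r by (intro add_right_mono mult_left_mono) auto
    also have "\<dots> = real p / (1 - r)" using r by (simp add: field_simps)
    finally show ?case .
  qed
  moreover obtain n :: nat where "real n > (t - t0) / \<omega>" using reals_Archimedean2 by blast
  then have "t - t0 \<le> real n * \<omega>" using period_pos by (simp add: field_simps)
  ultimately show ?thesis by (simp add: F_def r_def)
qed

definition block :: "real \<Rightarrow> int" where
  "block s = \<lceil>(s - \<theta> 0) / \<omega>\<rceil> - 1"

lemma block_bounds: "\<theta> (block s * int p) < s \<and> s \<le> \<theta> ((block s + 1) * int p)"
proof -
  have blocks: "\<theta> (j * int p) = \<theta> 0 + of_int j * \<omega>" for j using shift_periods[of 0 j] by simp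
  have "of_int (block s) < (s - \<theta> 0) / \<omega>" "(s - \<theta> 0) / \<omega> \<le> of_int (block s + 1)"
    unfolding block_def by linarith+
  then have "of_int (block s) * \<omega> < s - \<theta> 0" "s - \<theta> 0 \<le> of_int (block s + 1) * \<omega>"
    using period_pos by (simp_all add: field_simps)
  then show ?thesis by (simp only: blocks) linarith
qed

lemma block_mono:
  assumes "s \<le> s'"
  shows "block s \<le> block s'"
proof -
  have "(s - \<theta> 0) / \<omega> \<le> (s' - \<theta> 0) / \<omega>"
    using assms period_pos by (simp add: divide_right_mono)
  then show ?thesis using ceiling_mono unfolding block_def by fastforce
qed

lemma block_shift: "block (s + of_int j * \<omega>) = block s + j"
proof -
  have "(s + of_int j * \<omega> - \<theta> 0) / \<omega> = (s - \<theta> 0) / \<omega> + of_int j"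
    using period_pos by (simp add: field_simps)
  then show ?thesis by (simp add: block_def)
qed

lemma block_forcing_eq:
  assumes "\<And>k t. \<theta> (k * int p) < t \<Longrightarrow> t \<le> \<theta> ((k + 1) * int p) \<Longrightarrow> g t = \<sigma> k"
  shows "g s = \<sigma> (block s)"
  using assms block_bounds by blast

lemma block_forcing_shift_uniform:
  assumes g: "\<And>k t. \<theta> (k * int p) < t \<Longrightarrow> t \<le> \<theta> ((k + 1) * int p) \<Longrightarrow> g t = \<sigma> k"
    and \<sigma>: "\<And>a b \<epsilon>. \<epsilon> > 0 \<Longrightarrow> \<forall>\<^sub>F n in sequentially. \<forall>k\<in>{a..b}. norm (\<sigma> (k + int (\<zeta> n)) - \<sigma> k) < \<epsilon>"
  shows "uniform_limit {-R..R} (\<lambda>n s. g (s + \<omega> * real (\<zeta> n)) - g s) (\<lambda>_. 0) sequentially"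
  unfolding uniform_limit_iff
proof (intro allI impI)
  fix \<epsilon> :: real assume "\<epsilon> > 0"
  have g_block: "g s = \<sigma> (block s)" for s
    by (rule block_forcing_eq[OF g])
  have shifted: "g (s + \<omega> * real m) = \<sigma> (block s + int m)" for s m
    using g_block[of "s + of_int (int m) * \<omega>"] block_shift[of s "int m"]
    by (simp add: mult.commute)
  have block_range: "block s \<in> {block (- R)..block R}" if "s \<in> {-R..R}" for s
    using that block_mono by auto
  from \<sigma>[OF \<open>\<epsilon> > 0\<close>, of "block (- R)" "block R"]
  show "\<forall>\<^sub>F n in sequentially. \<forall>s\<in>{-R..R}. dist (g (s + \<omega> * real (\<zeta> n)) - g s) 0 < \<epsilon>"
    by (rule eventually_mono) (use shifted block_range in \<open>auto simp: g_block dist_norm\<close>)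
qed

lemma block_forcing_weighted_sup_tendsto_zero:
  assumes g: "\<And>k t. \<theta> (k * int p) < t \<Longrightarrow> t \<le> \<theta> ((k + 1) * int p) \<Longrightarrow> g t = \<sigma> k"
    and \<sigma>_le: "\<And>k. norm (\<sigma> k) \<le> M"
    and \<sigma>: "\<And>a b \<epsilon>. \<epsilon> > 0 \<Longrightarrow> \<forall>\<^sub>F n in sequentially. \<forall>k\<in>{a..b}. norm (\<sigma> (k + int (\<zeta> n)) - \<sigma> k) < \<epsilon>"
    and "\<gamma> > 0"
  shows "(\<lambda>n. weighted_sup \<gamma> (\<lambda>s. g (s + \<omega> * real (\<zeta> n)) - g s)) \<longlonglongrightarrow> 0"
proof (rule weighted_sup_tendsto_zero[OF \<open>\<gamma> > 0\<close> _ block_forcing_shift_uniform[OF g \<sigma>]])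
  fix n s
  have g_block: "g s = \<sigma> (block s)" for s
    by (rule block_forcing_eq[OF g])
  show "norm (g (s + \<omega> * real (\<zeta> n)) - g s) \<le> 2 * M"
    unfolding g_block
    using norm_triangle_ineq4[of "\<sigma> (block (s + \<omega> * real (\<zeta> n)))" "\<sigma> (block s)"]
      \<sigma>_le[of "block (s + \<omega> * real (\<zeta> n))"] \<sigma>_le[of "block s"]
    by linarith
qed

lemma solution_shift_periods:
  assumes "impulsive_solution A B f g h \<theta> x" and "\<And>t y. f (t + \<omega>) y = f t y"
  shows "impulsive_solution A B f (\<lambda>t. g (t + \<omega> * real m)) h \<theta> (\<lambda>t. x (t + \<omega> * real m))"
proof (rule impulsive_solution_shift[OF assms(1)])
  show "f (t + \<omega> * real m) y = f t y" for t y
    using periodic_multiple[of "\<lambda>t. f t y" \<omega> t m] assms(2) by (simp add: mult.commute)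
  show "\<theta> (k + int m * int p) = \<theta> k + \<omega> * real m" for k
    using shift_periods_nat[of k m] by (simp add: mult.commute)
qed

end

section \<open>Variation of constants\<close>

locale stable_impulsive_linear = impulse_moments \<theta> p \<omega>
  for \<theta> :: "int \<Rightarrow> real" and p \<omega> +
  fixes A B :: "real^'n^'n" and N lam :: real
  assumes commute: "A ** B = B ** A"
    and matriciant_bound: "\<And>t s. s \<le> t \<Longrightarrow> mnorm (matriciant A B \<theta> t s) \<le> N * exp (- lam * (t - s))"
    and rate_pos: "lam > 0"
begin

abbreviation U :: "real \<Rightarrow> real \<Rightarrow> real^'n^'n" where
  "U \<equiv> matriciant A B \<theta>"

lemma commute_jump_power: "A ** matpow (mat 1 + B) n = matpow (mat 1 + B) n ** A"
  by (rule matpow_commute) (simp add: matrix_add_ldistrib matrix_add_rdistrib commute)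

lemma one_le_N: "1 \<le> N"
  using matriciant_bound[of t t] by (simp add: matriciant_def)

lemma norm_matriciant_vector_le:
  "s \<le> t \<Longrightarrow> norm (U t s *v x) \<le> N * exp (- lam * (t - s)) * norm x"
  using norm_matrix_vector_le_mnorm[of "U t s" x] matriciant_bound[of s t]
  by (meson mult_right_mono norm_ge_zero order_trans)

lemma matriciant_eq: "U t s = mexp ((t - s) *\<^sub>R A) ** matpow (mat 1 + B) (num_in \<theta> {s..<t})"
  by (cases "t = s") (simp_all add: matriciant_def num_in_def matpow_def)

lemma matriciant_piece:
  assumes "\<theta> k < s" "s \<le> \<theta> (k + 1)"
  shows "U t s = mexp ((t - s) *\<^sub>R A) ** matpow (mat 1 + B) (num_in \<theta> {\<theta> k<..<t})"
proof -
  have "\<theta> j \<in> {s..<t} \<longleftrightarrow> \<theta> j \<in> {\<theta> k<..<t}" for j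
  proof -
    have "\<theta> k < \<theta> j \<longleftrightarrow> \<theta> (k + 1) \<le> \<theta> j" by (simp only: less_iff le_iff) linarith
    then show ?thesis using assms by (auto simp del: le_iff less_iff)
  qed
  then show ?thesis by (simp add: matriciant_eq num_in_def)
qed

lemma matriciant_at_impulse:
  assumes "\<theta> k < t"
  shows "U t (\<theta> k) =
           mexp ((t - \<theta> k) *\<^sub>R A) ** matpow (mat 1 + B) (num_in \<theta> {\<theta> k<..<t}) ** (mat 1 + B)"
proof -
  have "{j. \<theta> j \<in> {\<theta> k..<t}} = insert k {j. \<theta> j \<in> {\<theta> k<..<t}}"
    using assms by auto
  moreover have "finite {j. \<theta> j \<in> {\<theta> k<..<t}}"
    by (rule finite_indices_between[where a = "\<theta> k" and b = t]) auto
  ultimately have "num_in \<theta> {\<theta> k..<t} = Suc (num_in \<theta> {\<theta> k<..<t})"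
    by (simp add: num_in_def)
  then show ?thesis by (simp add: matriciant_eq matpow_Suc_right matrix_mul_assoc)
qed

lemma pullback_continuous_left:
  assumes "continuous (at_left s) w"
  shows "continuous (at_left s) (\<lambda>s. U t s *v w s)"
proof -
  obtain k where k: "\<theta> k < s" "s \<le> \<theta> (k + 1)" by (rule impulse_interval)
  define Q where "Q = matpow (mat 1 + B) (num_in \<theta> {\<theta> k<..<t})"
  have "continuous (at_left s) (\<lambda>s. mexp ((t - s) *\<^sub>R A) *v (Q *v w s))"
    by (intro bounded_bilinear.continuous[OF bounded_bilinear_matrix_vector_mult]
        continuous_mexp_backward bounded_linear.continuous[OF matrix_vector_mul_bounded_linear] assms)
  moreover have "eventually (\<lambda>s'. mexp ((t - s') *\<^sub>R A) *v (Q *v w s') = U t s' *v w s') (at_left s)"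
    using eventually_at_left_real[OF k(1)]
    by (rule eventually_mono) (use k in \<open>auto simp: matriciant_piece Q_def matrix_vector_mul_assoc\<close>)
  moreover have "mexp ((t - s) *\<^sub>R A) *v (Q *v w s) = U t s *v w s"
    using k by (simp add: matriciant_piece Q_def matrix_vector_mul_assoc)
  ultimately show ?thesis
    unfolding continuous_within by (auto elim: Lim_transform_eventually)
qed

lemma pullback_has_vector_derivative:
  assumes "s \<notin> range \<theta>" and w: "(w has_vector_derivative A *v w s + y) (at s)"
  shows "((\<lambda>s. U t s *v w s) has_vector_derivative U t s *v y) (at s)"
proof -
  obtain k where k: "\<theta> k < s" "s \<le> \<theta> (k + 1)" by (rule impulse_interval)
  with assms(1) have s: "s \<in> {\<theta> k<..<\<theta> (k + 1)}" by (auto simp: order.order_iff_strict)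
  define E where "E s = mexp ((t - s) *\<^sub>R A)" for s
  define Q where "Q = matpow (mat 1 + B) (num_in \<theta> {\<theta> k<..<t})"
  have U: "U t s' = E s' ** Q" if "s' \<in> {\<theta> k<..<\<theta> (k + 1)}" for s'
    using that by (simp add: matriciant_piece E_def Q_def)
  have "((\<lambda>s. E s *v (Q *v w s)) has_vector_derivative
      E s *v (Q *v (A *v w s + y)) + (- (E s ** A)) *v (Q *v w s)) (at s)"
    unfolding E_def
    by (intro bounded_bilinear.has_vector_derivative[OF bounded_bilinear_matrix_vector_mult]
        has_vector_derivative_mexp_backward
        bounded_linear.has_vector_derivative[OF matrix_vector_mul_bounded_linear w])
  moreover have "E s *v (Q *v (A *v w s + y)) + (- (E s ** A)) *v (Q *v w s) = U t s *v y"
  proof -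
    have "(- (E s ** A)) *v (Q *v w s) = - (E s *v (Q *v (A *v w s)))"
      unfolding matrix_vector_mult_uminus_left
      by (simp add: matrix_vector_mul_assoc matrix_mul_assoc[symmetric] Q_def commute_jump_power)
    then show ?thesis
      unfolding U[OF s] matrix_vector_right_distrib by (simp add: matrix_vector_mul_assoc)
  qed
  ultimately have "((\<lambda>s. E s *v (Q *v w s)) has_vector_derivative U t s *v y) (at s)" by simp
  then show ?thesis
    by (rule has_vector_derivative_transform_within_open[OF _ _ s])
      (auto simp: U matrix_vector_mul_assoc)
qed

lemma pullback_jump:
  assumes "\<theta> k < t" and w: "(w \<longlongrightarrow> w (\<theta> k) + B *v w (\<theta> k) + y) (at_right (\<theta> k))"
  obtains a where "((\<lambda>s. U t s *v w s) \<longlongrightarrow> a) (at_right (\<theta> k))"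
    and "norm (a - U t (\<theta> k) *v w (\<theta> k)) \<le> N * exp (- lam * (t - \<theta> k)) * norm y"
proof -
  define E where "E s = mexp ((t - s) *\<^sub>R A)" for s
  define Q where "Q = matpow (mat 1 + B) (num_in \<theta> {\<theta> k<..<t})"
  have lim: "((\<lambda>s. E s *v (Q *v z s)) \<longlongrightarrow> E (\<theta> k) *v (Q *v z0)) (at_right (\<theta> k))"
    if "(z \<longlongrightarrow> z0) (at_right (\<theta> k))" for z z0
    using continuous_mexp_backward[of "\<theta> k" "{\<theta> k<..}" t A]
    by (intro bounded_bilinear.tendsto[OF bounded_bilinear_matrix_vector_mult]
        bounded_linear.tendsto[OF matrix_vector_mul_bounded_linear] that)
      (simp add: continuous_within E_def)
  have "\<theta> k < min (\<theta> (k + 1)) t" using assms(1) by simp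
  then have "eventually (\<lambda>s. s \<in> {\<theta> k<..<min (\<theta> (k + 1)) t}) (at_right (\<theta> k))"
    by (rule eventually_at_right_real)
  then have near: "eventually (\<lambda>s. s < t \<and> U t s = E s ** Q) (at_right (\<theta> k))"
    by (rule eventually_mono) (auto simp: matriciant_piece E_def Q_def)
  show ?thesis
  proof
    show "((\<lambda>s. U t s *v w s) \<longlongrightarrow> E (\<theta> k) *v (Q *v (w (\<theta> k) + B *v w (\<theta> k) + y))) (at_right (\<theta> k))"
      using lim[OF w]
    proof (rule Lim_transform_eventually)
      show "eventually (\<lambda>s. E s *v (Q *v w s) = U t s *v w s) (at_right (\<theta> k))"
        using near by (rule eventually_mono) (simp add: matrix_vector_mul_assoc)
    qed
    have "U t (\<theta> k) *v w (\<theta> k) = E (\<theta> k) *v (Q *v (w (\<theta> k) + B *v w (\<theta> k)))"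
      using matriciant_at_impulse[OF assms(1)]
      by (simp add: E_def Q_def matrix_vector_mul_assoc[symmetric] matrix_vector_mult_add_rdistrib)
    then have "E (\<theta> k) *v (Q *v (w (\<theta> k) + B *v w (\<theta> k) + y)) - U t (\<theta> k) *v w (\<theta> k)
        = E (\<theta> k) *v (Q *v y)"
      by (simp add: matrix_vector_right_distrib)
    moreover have "norm (E (\<theta> k) *v (Q *v y)) \<le> N * exp (- lam * (t - \<theta> k)) * norm y"
    proof (rule tendsto_le[OF _ _ tendsto_norm[OF lim[OF tendsto_const]]])
      show "((\<lambda>s. N * exp (- lam * (t - s)) * norm y) \<longlongrightarrow> N * exp (- lam * (t - \<theta> k)) * norm y)
          (at_right (\<theta> k))"
        by (intro tendsto_intros)
      show "eventually (\<lambda>s. norm (E s *v (Q *v y)) \<le> N * exp (- lam * (t - s)) * norm y) (at_right (\<theta> k))"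
        using near
        by (rule eventually_mono) (metis less_imp_le matrix_vector_mul_assoc norm_matriciant_vector_le)
    qed simp
    ultimately show "norm (E (\<theta> k) *v (Q *v (w (\<theta> k) + B *v w (\<theta> k) + y)) - U t (\<theta> k) *v w (\<theta> k))
        \<le> N * exp (- lam * (t - \<theta> k)) * norm y"
      by simp
  qed
qed

lemma variation_of_constants_le:
  fixes w F :: "real \<Rightarrow> real^'n" and H :: "int \<Rightarrow> real^'n"
  assumes ode: "\<And>s. s \<notin> range \<theta> \<Longrightarrow> (w has_vector_derivative A *v w s + F s) (at s)"
    and left: "\<And>k. continuous (at_left (\<theta> k)) w"
    and jump: "\<And>k. (w \<longlongrightarrow> w (\<theta> k) + B *v w (\<theta> k) + H k) (at_right (\<theta> k))"
    and F_le: "\<And>s. s \<le> t \<Longrightarrow> s \<notin> range \<theta> \<Longrightarrow>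
                 N * exp (- lam * (t - s)) * norm (F s) \<le> C1 * exp (- \<mu> * (t - s))"
    and H_le: "\<And>k. \<theta> k < t \<Longrightarrow>
                 N * exp (- lam * (t - \<theta> k)) * norm (H k) \<le> C2 * exp (- \<mu> * (t - \<theta> k))"
    and "\<mu> > 0" "C1 \<ge> 0" "C2 \<ge> 0" "t0 \<le> t"
  shows "norm (w t - U t t0 *v w t0) \<le> C1 / \<mu> + C2 * (real p / (1 - exp (- \<mu> * \<omega>)))"
proof -
  define c where "c = (\<lambda>k. exp (- \<mu> * (t - \<theta> k)))"
  \<comment> \<open>The majorant: its derivative dominates that of \<open>U t s *v w s\<close>, its jumps the impulses.\<close>
  define \<Phi> where "\<Phi> s = C1 * exp (- \<mu> * (t - s)) / \<mu> + C2 * impulse_sum c t0 s" for s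
  define J where "J = \<theta> ` {k. t0 \<le> \<theta> k \<and> \<theta> k < t}"
  have "finite J" unfolding J_def by (intro finite_imageI finite_indices_between[where b = t]) auto
  have w_left: "continuous (at_left s) w" for s
    using left ode has_vector_derivative_continuous continuous_at_imp_continuous_at_within
    by (metis rangeE)
  have "norm (U t t *v w t - U t t0 *v w t0) \<le> \<Phi> t - \<Phi> t0"
  proof (rule norm_increment_le_majorant[OF \<open>t0 \<le> t\<close> \<open>finite J\<close>])
    fix s assume s: "s \<in> {t0..<t} - J"
    then have "s \<notin> range \<theta>" by (auto simp: J_def)
    have "(\<Phi> has_real_derivative C1 * exp (- \<mu> * (t - s))) (at s)"
      unfolding \<Phi>_def using \<open>\<mu> > 0\<close> by (intro impulse_majorant_has_derivative \<open>s \<notin> range \<theta>\<close>) simp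
    moreover have "norm (U t s *v F s) \<le> C1 * exp (- \<mu> * (t - s))"
      using norm_matriciant_vector_le[of s t "F s"] F_le[of s] s \<open>s \<notin> range \<theta>\<close> by simp
    ultimately show "((\<lambda>s. U t s *v w s) has_vector_derivative U t s *v F s) (at s) \<and>
        (\<Phi> has_real_derivative C1 * exp (- \<mu> * (t - s))) (at s) \<and>
        norm (U t s *v F s) \<le> C1 * exp (- \<mu> * (t - s))"
      using pullback_has_vector_derivative[OF \<open>s \<notin> range \<theta>\<close> ode[OF \<open>s \<notin> range \<theta>\<close>]] by blast
  next
    fix s
    show "continuous (at_left s) (\<lambda>s. U t s *v w s) \<and> continuous (at_left s) \<Phi>"
      unfolding \<Phi>_def
      by (intro conjI pullback_continuous_left w_left continuous_intros impulse_sum_continuous_left)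
        (use \<open>\<mu> > 0\<close> in auto)
  next
    fix s assume "s \<in> {t0..<t} \<inter> J"
    then obtain k where k: "s = \<theta> k" "t0 \<le> \<theta> k" "\<theta> k < t" by (auto simp: J_def)
    obtain a where "((\<lambda>s. U t s *v w s) \<longlongrightarrow> a) (at_right (\<theta> k))"
      and a: "norm (a - U t (\<theta> k) *v w (\<theta> k)) \<le> N * exp (- lam * (t - \<theta> k)) * norm (H k)"
      using pullback_jump[OF k(3) jump] by blast
    moreover have "(\<Phi> \<longlongrightarrow> \<Phi> (\<theta> k) + C2 * c k) (at_right (\<theta> k))"
      unfolding \<Phi>_def using impulse_sum_right_limit[OF k(2)] \<open>\<mu> > 0\<close>
      by (auto intro!: tendsto_eq_intros simp: algebra_simps)
    moreover have "norm (a - U t (\<theta> k) *v w (\<theta> k)) \<le> \<Phi> (\<theta> k) + C2 * c k - \<Phi> (\<theta> k)"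
      using a H_le[OF k(3)] by (simp add: c_def)
    ultimately show "\<exists>a b. ((\<lambda>s. U t s *v w s) \<longlongrightarrow> a) (at_right s) \<and> (\<Phi> \<longlongrightarrow> b) (at_right s) \<and>
        norm (a - U t s *v w s) \<le> b - \<Phi> s"
      unfolding k(1) by blast
  qed
  also have "\<Phi> t - \<Phi> t0 \<le> C1 / \<mu> + C2 * impulse_sum c t0 t"
    using \<open>\<mu> > 0\<close> \<open>C1 \<ge> 0\<close> by (simp add: \<Phi>_def)
  also have "\<dots> \<le> C1 / \<mu> + C2 * (real p / (1 - exp (- \<mu> * \<omega>)))"
    using mult_left_mono[OF impulse_sum_exp_le[OF \<open>\<mu> > 0\<close>, of t t0] \<open>C2 \<ge> 0\<close>]
    by (simp add: c_def)
  finally show ?thesis by (simp add: matriciant_def)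
qed

lemma norm_le_of_variation_le:
  assumes "bounded (range w)" and var: "\<And>t0. t0 \<le> t \<Longrightarrow> norm (w t - U t t0 *v w t0) \<le> K"
  shows "norm (w t) \<le> K"
proof -
  obtain M where M: "\<And>s. norm (w s) \<le> M" using assms(1) by (auto simp: bounded_iff)
  have "norm (w t) \<le> K + N * exp (- lam * (t - t0)) * M" if "t0 \<le> t" for t0
  proof -
    have "norm (w t) \<le> norm (w t - U t t0 *v w t0) + norm (U t t0 *v w t0)"
      using norm_triangle_ineq[of "w t - U t t0 *v w t0" "U t t0 *v w t0"] by simp
    also have "\<dots> \<le> K + N * exp (- lam * (t - t0)) * M"
    proof -
      have "N * exp (- lam * (t - t0)) * norm (w t0) \<le> N * exp (- lam * (t - t0)) * M"
        using one_le_N M[of t0] by (intro mult_left_mono) auto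
      then show ?thesis using var[OF that] norm_matriciant_vector_le[OF that, of "w t0"] by linarith
    qed
    finally show ?thesis .
  qed
  moreover have "((\<lambda>t0. N * exp (- lam * (t - t0)) * M) \<longlongrightarrow> 0) at_bot"
    by (intro tendsto_mult_left_zero tendsto_mult_right_zero exp_decay_at_bot rate_pos)
  then have "((\<lambda>t0. K + N * exp (- lam * (t - t0)) * M) \<longlongrightarrow> K) at_bot"
    using tendsto_add[OF tendsto_const] by fastforce
  ultimately show ?thesis
    by (intro tendsto_lowerbound[of _ _ at_bot]) (auto simp: eventually_at_bot_linorder intro!: exI[of _ t])
qed

lemma weighted_sup_le_forcing:
  fixes w F e :: "real \<Rightarrow> real^'n" and H :: "int \<Rightarrow> real^'n"
  assumes ode: "\<And>s. s \<notin> range \<theta> \<Longrightarrow> (w has_vector_derivative A *v w s + F s) (at s)"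
    and left: "\<And>k. continuous (at_left (\<theta> k)) w"
    and jump: "\<And>k. (w \<longlongrightarrow> w (\<theta> k) + B *v w (\<theta> k) + H k) (at_right (\<theta> k))"
    and F_le: "\<And>s. norm (F s) \<le> Lf * norm (w s) + norm (e s)"
    and H_le: "\<And>k. norm (H k) \<le> Lh * norm (w (\<theta> k))"
    and bounded: "bounded (range w)" "bounded (range e)"
    and rates: "0 < \<mu>" "\<mu> < lam" and "0 \<le> Lf" "0 \<le> Lh"
    and q_eq: "q = N * (Lf / \<mu> + real p * Lh / (1 - exp (- \<mu> * \<omega>)))" and "q < 1"
  shows "weighted_sup (lam - \<mu>) w \<le> N * weighted_sup (lam - \<mu>) e / (\<mu> * (1 - q))"
proof -
  define \<gamma> where "\<gamma> = lam - \<mu>"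
  have "\<gamma> \<ge> 0" using rates by (simp add: \<gamma>_def)
  define Sw Se where "Sw = weighted_sup \<gamma> w" and "Se = weighted_sup \<gamma> e"
  have Sw: "0 \<le> Sw" "norm (w s) \<le> Sw * exp (\<gamma> * \<bar>s\<bar>)" for s
    unfolding Sw_def using bounded(1) \<open>\<gamma> \<ge> 0\<close> by (simp_all add: weighted_sup_nonneg norm_le_weighted_sup)
  have Se: "0 \<le> Se" "norm (e s) \<le> Se * exp (\<gamma> * \<bar>s\<bar>)" for s
    unfolding Se_def using bounded(2) \<open>\<gamma> \<ge> 0\<close> by (simp_all add: weighted_sup_nonneg norm_le_weighted_sup)
  have "norm (w t) \<le> exp (\<gamma> * \<bar>t\<bar>) * (q * Sw + N * Se / \<mu>)" for t
  proof (rule norm_le_of_variation_le[OF bounded(1)])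
    fix t0 assume "t0 \<le> t"
    have "norm (w t - U t t0 *v w t0) \<le> N * (Lf * Sw + Se) * exp (\<gamma> * \<bar>t\<bar>) / \<mu>
        + N * (Lh * Sw) * exp (\<gamma> * \<bar>t\<bar>) * (real p / (1 - exp (- \<mu> * \<omega>)))"
    proof (rule variation_of_constants_le[OF ode left jump])
      show "N * exp (- lam * (t - s)) * norm (F s) \<le> N * (Lf * Sw + Se) * exp (\<gamma> * \<bar>t\<bar>) * exp (- \<mu> * (t - s))"
        if "s \<le> t" for s
        unfolding \<gamma>_def
      proof (rule exp_weighted_decay_le[OF that])
        show "norm (F s) \<le> (Lf * Sw + Se) * exp ((lam - \<mu>) * \<bar>s\<bar>)"
          using F_le[of s] mult_left_mono[OF Sw(2) \<open>0 \<le> Lf\<close>, of s] Se(2)[of s]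
          by (simp add: algebra_simps \<gamma>_def)
      qed (use rates one_le_N Sw(1) Se(1) \<open>0 \<le> Lf\<close> in auto)
      show "N * exp (- lam * (t - \<theta> k)) * norm (H k) \<le> N * (Lh * Sw) * exp (\<gamma> * \<bar>t\<bar>) * exp (- \<mu> * (t - \<theta> k))"
        if "\<theta> k < t" for k
        unfolding \<gamma>_def
      proof (rule exp_weighted_decay_le)
        show "norm (H k) \<le> Lh * Sw * exp ((lam - \<mu>) * \<bar>\<theta> k\<bar>)"
          using H_le[of k] mult_left_mono[OF Sw(2) \<open>0 \<le> Lh\<close>, of "\<theta> k"]
          by (simp add: algebra_simps \<gamma>_def)
      qed (use that rates one_le_N Sw(1) \<open>0 \<le> Lh\<close> in auto)
    qed (use rates one_le_N Sw(1) Se(1) \<open>0 \<le> Lf\<close> \<open>0 \<le> Lh\<close> \<open>t0 \<le> t\<close> in auto)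
    also have "\<dots> = exp (\<gamma> * \<bar>t\<bar>) * (q * Sw + N * Se / \<mu>)"
      using rates period_pos by (simp add: q_eq field_simps)
    finally show "norm (w t - U t t0 *v w t0) \<le> exp (\<gamma> * \<bar>t\<bar>) * (q * Sw + N * Se / \<mu>)" .
  qed
  then have "Sw \<le> q * Sw + N * Se / \<mu>"
    unfolding Sw_def by (intro weighted_sup_le) (simp add: mult.commute)
  then show ?thesis
    using \<open>q < 1\<close> rates by (simp add: Sw_def Se_def \<gamma>_def field_simps)
qed

lemma weighted_sup_solutions_diff_le:
  assumes sol1: "impulsive_solution A B f g1 h \<theta> x1" and sol2: "impulsive_solution A B f g2 h \<theta> x2"
    and bounded: "bounded (range x1)" "bounded (range x2)" "bounded (range (\<lambda>t. g1 t - g2 t))"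
    and f_lip: "\<And>t y z. norm (f t y - f t z) \<le> Lf * norm (y - z)"
    and h_lip: "\<And>y z. norm (h y - h z) \<le> Lh * norm (y - z)"
    and rates: "0 < \<mu>" "\<mu> < lam" and lipschitz_nonneg: "0 \<le> Lf" "0 \<le> Lh"
    and q: "q = N * (Lf / \<mu> + real p * Lh / (1 - exp (- \<mu> * \<omega>)))" "q < 1"
  shows "weighted_sup (lam - \<mu>) (\<lambda>t. x1 t - x2 t)
           \<le> N * weighted_sup (lam - \<mu>) (\<lambda>t. g1 t - g2 t) / (\<mu> * (1 - q))"
proof (rule weighted_sup_le_forcing[OF impulsive_solution_diff[OF sol1 sol2]])
  show "norm (f s (x1 s) - f s (x2 s) + (g1 s - g2 s)) \<le> Lf * norm (x1 s - x2 s) + norm (g1 s - g2 s)" for s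
    using norm_triangle_ineq[of "f s (x1 s) - f s (x2 s)" "g1 s - g2 s"] f_lip[of s "x1 s" "x2 s"]
    by linarith
  show "norm (h (x1 (\<theta> k)) - h (x2 (\<theta> k))) \<le> Lh * norm (x1 (\<theta> k) - x2 (\<theta> k))" for k
    by (rule h_lip)
  show "bounded (range (\<lambda>t. x1 t - x2 t))"
    using bounded(1,2) by (rule bounded_minus_comp)
qed (assumption | fact bounded(3) rates lipschitz_nonneg q)+

end

theorem lemma3p2:
  fixes A B :: "real^'n^'n"
    and f :: "real \<Rightarrow> real^'n \<Rightarrow> real^'n"
    and h :: "real^'n \<Rightarrow> real^'n"
    and g :: "real \<Rightarrow> real^'n"
    and \<theta> :: "int \<Rightarrow> real"
    and \<sigma> :: "int \<Rightarrow> real^'n"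
    and \<zeta> :: "nat \<Rightarrow> nat"
    and \<phi> :: "real \<Rightarrow> real^'n"
    and p :: nat and \<omega> M\<sigma> Mf Mh Lf Lh N lam :: real
  assumes \<omega>_pos: "\<omega> > 0"
    and f_cont: "continuous_on UNIV (\<lambda>(t, x). f t x)"
    and h_cont: "continuous_on UNIV h"
    and f_per: "\<forall>t x. f (t + \<omega>) x = f t x"
    and \<theta>_mono: "strict_mono \<theta>"
    and \<theta>_per: "\<forall>k. \<theta> (k + int p) = \<theta> k + \<omega>"
    and M\<sigma>: "M\<sigma> > 0" "\<forall>k. norm (\<sigma> k) \<le> M\<sigma>"
    and g_def: "\<forall>k t. \<theta> (k * int p) < t \<and> t \<le> \<theta> ((k + 1) * int p) \<longrightarrow> g t = \<sigma> k"
    and A1: "A ** B = B ** A" "det (mat 1 + B) \<noteq> 0"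
    and A2: "\<exists>L. mexp L = cmat (mat 1 + B) \<and> L ** cmat A = cmat A ** L \<and>
               (\<forall>\<mu>. is_eigenvalue (cmat A + (of_real (real p / \<omega>)) *s L) \<mu> \<longrightarrow> Re \<mu> < 0)"
    and A3: "Mf > 0" "Mh > 0" "\<forall>t x. norm (f t x) \<le> Mf" "\<forall>x. norm (h x) \<le> Mh"
    and A4: "Lf > 0" "Lh > 0"
            "\<forall>t x1 x2. norm (f t x1 - f t x2) \<le> Lf * norm (x1 - x2)"
            "\<forall>x1 x2. norm (h x1 - h x2) \<le> Lh * norm (x1 - x2)"
    and Nlam: "N > 0" "lam > 0"
            "\<forall>t s. s \<le> t \<longrightarrow> mnorm (matriciant A B \<theta> t s) \<le> N * exp (- lam * (t - s))"
    and A5: "N * (Lf / lam + real p * Lh / (1 - exp (- lam * \<omega>))) < 1"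
    and A6: "N * Lf + (real p / \<omega>) * ln (1 + N * Lh) < lam"
    and \<zeta>_pos: "\<forall>n. \<zeta> n > 0"
    and \<zeta>_lim: "filterlim \<zeta> at_top sequentially"
    and \<sigma>_rec: "\<forall>a b. \<forall>\<epsilon>>0. \<forall>\<^sub>F n in sequentially.
                   \<forall>k\<in>{a..b}. norm (\<sigma> (k + int (\<zeta> n)) - \<sigma> k) < \<epsilon>"
    and \<phi>_sol: "impulsive_solution A B f g h \<theta> \<phi>"
    and \<phi>_bdd: "bounded (range \<phi>)"
  shows "\<forall>K. compact K \<longrightarrow>
           uniform_limit K (\<lambda>n t. \<phi> (t + \<omega> * real (\<zeta> n)) - \<phi> t) (\<lambda>t. 0) sequentially"
proof -
  interpret stable_impulsive_linear \<theta> p \<omega> A B N lam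
    using \<theta>_mono \<theta>_per \<omega>_pos A1(1) Nlam by unfold_locales blast+
  obtain \<mu> where \<mu>: "0 < \<mu>" "\<mu> < lam"
    and q: "N * (Lf / \<mu> + real p * Lh / (1 - exp (- \<mu> * \<omega>))) < 1"
    using contraction_rate_below[OF \<omega>_pos Nlam(2) A5] by blast
  define C where "C = N / (\<mu> * (1 - N * (Lf / \<mu> + real p * Lh / (1 - exp (- \<mu> * \<omega>)))))"
  define w where "w = (\<lambda>n t. \<phi> (t + \<omega> * real (\<zeta> n)) - \<phi> t)"
  define \<Gamma> where "\<Gamma> n = weighted_sup (lam - \<mu>) (\<lambda>t. g (t + \<omega> * real (\<zeta> n)) - g t)" for n
  have g_blocks: "\<And>k t. \<theta> (k * int p) < t \<Longrightarrow> t \<le> \<theta> ((k + 1) * int p) \<Longrightarrow> g t = \<sigma> k"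
    using g_def by blast
  have "g t = \<sigma> (block t)" for t
    by (rule block_forcing_eq[OF g_blocks])
  then have "bounded (range g)"
    using M\<sigma>(2) by (auto simp: bounded_iff)
  moreover have "range (\<lambda>t. g (t + T)) \<subseteq> range g" for T
    by auto
  ultimately have g_diff: "bounded (range (\<lambda>t. g (t + T) - g t))" for T
    by (metis bounded_minus_comp bounded_subset)
  have \<phi>_shift: "bounded (range (\<lambda>t. \<phi> (t + T)))" for T
    using \<phi>_bdd by (rule bounded_subset) auto
  have w_bounded: "bounded (range (w n))" for n
    unfolding w_def using \<phi>_shift \<phi>_bdd by (rule bounded_minus_comp)
  have f_period: "\<And>t y. f (t + \<omega>) y = f t y"
    using f_per by blast
  have "weighted_sup (lam - \<mu>) (w n) \<le> C * \<Gamma> n" for n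
    using weighted_sup_solutions_diff_le[OF solution_shift_periods[OF \<phi>_sol f_period] \<phi>_sol
        \<phi>_shift \<phi>_bdd g_diff A4(3)[rule_format] A4(4)[rule_format] \<mu>
        less_imp_le[OF A4(1)] less_imp_le[OF A4(2)] refl q]
    by (simp add: C_def \<Gamma>_def w_def)
  then have norm_le: "norm (weighted_sup (lam - \<mu>) (w n)) \<le> C * \<Gamma> n" for n
    using weighted_sup_nonneg[OF w_bounded, of "lam - \<mu>" n] \<mu>(2) by simp
  have "\<And>a b \<epsilon>. \<epsilon> > 0 \<Longrightarrow> \<forall>\<^sub>F n in sequentially. \<forall>k\<in>{a..b}. norm (\<sigma> (k + int (\<zeta> n)) - \<sigma> k) < \<epsilon>"
    using \<sigma>_rec by blast
  then have "\<Gamma> \<longlonglongrightarrow> 0"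
    unfolding \<Gamma>_def using \<mu>
    by (intro block_forcing_weighted_sup_tendsto_zero[OF g_blocks M\<sigma>(2)[rule_format]]) auto
  have "(\<lambda>n. weighted_sup (lam - \<mu>) (w n)) \<longlonglongrightarrow> 0"
  proof (rule Lim_null_comparison)
    show "eventually (\<lambda>n. norm (weighted_sup (lam - \<mu>) (w n)) \<le> C * \<Gamma> n) sequentially"
      using norm_le by (intro always_eventually allI)
    show "(\<lambda>n. C * \<Gamma> n) \<longlonglongrightarrow> 0"
      by (rule tendsto_mult_right_zero) fact
  qed
  from uniform_limit_compact_weighted_sup[OF this w_bounded] \<mu>
  show ?thesis by (simp add: w_def)
qed

end
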